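(* Let $d \ge 2$ and let $c_0,\dots,c_7 \in \mathbb{Z}_d$. The $d$-state first degree cellular automaton with parameters $\langle c_0,c_1,c_2,c_3,c_4,c_5,c_6,c_7\rangle$ is reversible for every number of cells $n \in \mathbb{N}$ (i.e. $G_n$ is a bijection of $\mathbb{Z}_d^n$ for every $n\ge 1$) if and only if all three of the following conditions hold: (1) $\gcd(c_5,d)=1$ (with $c_7$ arbitrary in $\mathbb{Z}_d$); (2) $c_0 \equiv c_1 \equiv c_2 \equiv c_3 \equiv 0 \pmod{\mathrm{rad}(d)}$; (3) $c_4 \cdot c_6 \equiv 0 \pmod{\mathrm{rad}(d)}$.
   Context: Fix an integer $d\ge 2$ and the state set $S=\mathbb{Z}_d=\{0,1,\dots,d-1\}$. A first degree cellular automaton (FDCA) with parameters $\langle c_0,\dots,c_7\rangle$, $c_i\in\mathbb{Z}_d$, is the one-dimensional 3-neighborhood cellular automaton whose local rule $R:S^3\to S$ is $R(x,y,z)=c_0xyz+c_1xy+c_2xz+c_3yz+c_4x+c_5y+c_6z+c_7 \pmod d$. For $n\in\mathbb{N}$, $n\ge1$, the $n$-cell automaton under the null boundary condition acts on configurations $x=(x_0,\dots,x_{n-1})\in S^n$ by the global map $G_n:S^n\to S^n$, $G_n(x)_i=R(x_{i-1},x_i,x_{i+1})$ for $0\le i\le n-1$, with the convention $x_{-1}=x_n=0$. The automaton is reversible for a given $n$ if $G_n$ is a bijection. $\mathrm{rad}(d)=\prod_{p\mid d,\ p\text{ prime}}p$ is the product of the distinct primes dividing $d$; since $\mathrm{rad}(d)\mid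 d$, congruences of elements of $\mathbb{Z}_d$ modulo $\mathrm{rad}(d)$ are well defined. *)

theory Defs
  imports "HOL-Computational_Algebra.Primes"
begin

definition rad :: "int \<Rightarrow> int" where
  "rad d = (\<Prod>p\<in>prime_factors d. p)"

definition fdca_rule :: "int \<Rightarrow> (nat \<Rightarrow> int) \<Rightarrow> int \<Rightarrow> int \<Rightarrow> int \<Rightarrow> int" where
  "fdca_rule d c x y z =
     (c 0 * x * y * z + c 1 * x * y + c 2 * x * z + c 3 * y * z
      + c 4 * x + c 5 * y + c 6 * z + c 7) mod d"

text \<open>Configurations of n cells: functions nat => int with values in Z_d on cells 0..n-1
  and 0 elsewhere (so that the null boundary x_n = 0 is built in).\<close>
definition configs :: "int \<Rightarrow> nat \<Rightarrow> (nat \<Rightarrow> int) set" where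
  "configs d n = {x. (\<forall>i<n. 0 \<le> x i \<and> x i < d) \<and> (\<forall>i\<ge>n. x i = 0)}"

definition global_map :: "int \<Rightarrow> (nat \<Rightarrow> int) \<Rightarrow> nat \<Rightarrow> (nat \<Rightarrow> int) \<Rightarrow> (nat \<Rightarrow> int)" where
  "global_map d c n x = (\<lambda>i. if i < n then
      fdca_rule d c (if i = 0 then 0 else x (i - 1)) (x i) (if i + 1 < n then x (i + 1) else 0)
    else 0)"

definition reversible :: "int \<Rightarrow> (nat \<Rightarrow> int) \<Rightarrow> nat \<Rightarrow> bool" where
  "reversible d c n \<longleftrightarrow> bij_betw (global_map d c n) (configs d n) (configs d n)"

end

theory Submission
  imports Defs "HOL-Number_Theory.Cong" "HOL-Combinatorics.Cycles"
begin

text \<open>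
  Both directions reduce to the primes p dividing d.
  Sufficiency is a lifting argument: when c0, ..., c3 vanish mod p, the difference of the
  images of two configurations that agree mod m is, modulo p m, linear in their difference
  with coefficients c4, c5, c6. As c5 is a unit and c4 or c6 vanishes mod p, the difference
  becomes divisible by p m cell by cell, sweeping from the right or from the left; starting
  from m = 1 this reaches divisibility by d.
  Necessity: reversibility mod d passes to every p dividing d, and for prime p explicit
  colliding configurations of at most four cells force c5 to be a unit and c0, ..., c3 to
  vanish mod p. If c4 and c6 were both units mod p, the rule would be affine and the map
  (x (i - 1), x i) to (x i, x (i + 1)) solving G x = G 0 would permute the pairs of residues;
  following the orbit of (0, 1) until it returns yields a nonzero configuration with the same
  image as the zero configuration.
\<close>

definition fdca_poly :: "(nat \<Rightarrow> int) \<Rightarrow> int \<Rightarrow> int \<Rightarrow> int \<Rightarrow> int" where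
  "fdca_poly c x y z = c 0 * x * y * z + c 1 * x * y + c 2 * x * z + c 3 * y * z
      + c 4 * x + c 5 * y + c 6 * z + c 7"

definition fdca_local :: "(nat \<Rightarrow> int) \<Rightarrow> nat \<Rightarrow> (nat \<Rightarrow> int) \<Rightarrow> nat \<Rightarrow> int" where
  "fdca_local c n x i =
     fdca_poly c (if i = 0 then 0 else x (i - 1)) (x i) (if i + 1 < n then x (i + 1) else 0)"

lemma global_map_eq: "global_map d c n x i = (if i < n then fdca_local c n x i mod d else 0)"
  by (simp add: global_map_def fdca_rule_def fdca_local_def fdca_poly_def)

lemma fdca_poly_mod_cong:
  fixes m :: int
  assumes "u mod m = u' mod m" "v mod m = v' mod m" "w mod m = w' mod m"
  shows "fdca_poly c u v w mod m = fdca_poly c u' v' w' mod m"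
  using assms unfolding fdca_poly_def cong_def[symmetric] by (intro cong_add cong_mult cong_refl)

lemma fdca_poly_diff_dvd:
  fixes a b :: int
  assumes "\<forall>j\<le>3. a dvd c j" and "b dvd u - u'" "b dvd v - v'" "b dvd w - w'"
    and "a * b dvd fdca_poly c u v w - fdca_poly c u' v' w'"
  shows "a * b dvd c 4 * (u - u') + c 5 * (v - v') + c 6 * (w - w')"
proof -
  have c03: "a dvd c 0" "a dvd c 1" "a dvd c 2" "a dvd c 3"
    using assms(1) by auto
  have "c 4 * (u - u') + c 5 * (v - v') + c 6 * (w - w')
      = (fdca_poly c u v w - fdca_poly c u' v' w')
        - (c 0 * (u * v * (w - w') + u * w' * (v - v') + v' * w' * (u - u'))
           + c 1 * (u * (v - v') + v' * (u - u')) + c 2 * (u * (w - w') + w' * (u - u'))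
           + c 3 * (v * (w - w') + w' * (v - v')))"
    unfolding fdca_poly_def by (simp add: algebra_simps)
  also have "a * b dvd \<dots>"
    using c03 assms(2-4) by (intro dvd_diff[OF assms(5)] dvd_add mult_dvd_mono dvd_mult) auto
  finally show ?thesis .
qed

lemma exists_inverse_mod_prime:
  fixes p a :: int
  assumes "prime p" "\<not> p dvd a"
  obtains e where "p dvd a * e - 1"
proof -
  have "coprime a p"
    using prime_imp_coprime[OF assms] by (simp add: coprime_commute)
  then obtain e where "[a * e = 1] (mod p)"
    using cong_solve_coprime_int by blast
  then show ?thesis
    using that by (simp add: cong_iff_dvd_diff)
qed

lemma coprime_iff_no_common_prime:
  fixes a b :: int
  shows "coprime a b \<longleftrightarrow> (\<forall>p. prime p \<longrightarrow> p dvd b \<longrightarrow> \<not> p dvd a)"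
proof
  assume "coprime a b"
  then show "\<forall>p. prime p \<longrightarrow> p dvd b \<longrightarrow> \<not> p dvd a"
    by (meson coprime_common_divisor not_prime_unit)
next
  assume no_prime: "\<forall>p. prime p \<longrightarrow> p dvd b \<longrightarrow> \<not> p dvd a"
  show "coprime a b"
  proof (rule ccontr)
    assume "\<not> coprime a b"
    then obtain g where "g dvd a" "g dvd b" "\<not> is_unit g"
      by (rule not_coprimeE)
    then obtain p where "prime p" "p dvd g"
      using prime_factor_int by auto
    then show False
      using no_prime \<open>g dvd a\<close> \<open>g dvd b\<close> by (meson dvd_trans)
  qed
qed

lemma rad_dvd_iff:
  fixes d t :: int
  assumes "d \<noteq> 0"
  shows "rad d dvd t \<longleftrightarrow> (\<forall>p. prime p \<longrightarrow> p dvd d \<longrightarrow> p dvd t)"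
proof
  assume rad: "rad d dvd t"
  show "\<forall>p. prime p \<longrightarrow> p dvd d \<longrightarrow> p dvd t"
  proof (intro allI impI)
    fix p :: int
    assume "prime p" "p dvd d"
    then have "p \<in> prime_factors d"
      using assms by (simp add: in_prime_factors_iff)
    then have "p dvd rad d"
      unfolding rad_def using dvd_prodI[of "prime_factors d" p "\<lambda>p. p"] by simp
    then show "p dvd t"
      using rad by (rule dvd_trans)
  qed
next
  assume prime_dvd: "\<forall>p. prime p \<longrightarrow> p dvd d \<longrightarrow> p dvd t"
  have "(\<Prod>p\<in>A. p) dvd t" if "finite A" "A \<subseteq> prime_factors d" for A
    using that
  proof (induction A rule: finite_induct)
    case (insert q A)
    have q: "prime q" "q dvd d"
      using insert.prems by (auto simp: in_prime_factors_iff)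
    have "coprime q (\<Prod>p\<in>A. p)"
    proof (rule prod_coprime_right)
      fix r assume "r \<in> A"
      then have "prime r" "q \<noteq> r"
        using insert by (auto simp: in_prime_factors_iff)
      then show "coprime q r"
        using q(1) primes_coprime by blast
    qed
    then show ?case
      using insert prime_dvd q by (simp add: divides_mult)
  qed simp
  then show "rad d dvd t"
    unfolding rad_def by simp
qed

lemma bij_betw_funpow_returns:
  assumes "finite S" "bij_betw f S S" "s \<in> S"
  obtains k where "k > 0" "(f ^^ k) s = s"
proof -
  define g where "g x = (if x \<in> S then f x else x)" for x
  have "bij_betw g S S"
    using assms(2) by (simp add: g_def cong: bij_betw_cong)
  then have "g permutes S"
    by (rule bij_imp_permutes) (simp add: g_def)
  then obtain k where k: "g ^^ k = id" "k > 0"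
    using permutation_is_nilpotent permutes_imp_permutation assms(1) by metis
  have "(g ^^ i) s = (f ^^ i) s \<and> (f ^^ i) s \<in> S" for i
    by (induction i) (use assms(2,3) in \<open>auto simp: g_def bij_betw_apply\<close>)
  then show ?thesis
    using that k by (metis id_apply)
qed

subsection \<open>Configurations and reversibility\<close>

lemma finite_configs: "finite (configs d n)"
proof (rule finite_subset)
  show "configs d n \<subseteq> {x. \<forall>i. (i \<in> {..<n} \<longrightarrow> x i \<in> {0..<d}) \<and> (i \<notin> {..<n} \<longrightarrow> x i = 0)}"
    by (auto simp: configs_def)
qed (rule finite_set_of_finite_funs; simp)

lemma global_map_in_configs: "d > 0 \<Longrightarrow> global_map d c n x \<in> configs d n"
  by (auto simp: configs_def global_map_eq)

lemma global_map_image_subset: "d > 0 \<Longrightarrow> global_map d c n ` configs d n \<subseteq> configs d n"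
  using global_map_in_configs by blast

lemma reversible_iff_inj_on:
  "d > 0 \<Longrightarrow> reversible d c n \<longleftrightarrow> inj_on (global_map d c n) (configs d n)"
  unfolding reversible_def bij_betw_def
  using endo_inj_surj[OF finite_configs global_map_image_subset] by blast

lemma reversible_iff_surj:
  assumes "d > 0"
  shows "reversible d c n \<longleftrightarrow> configs d n \<subseteq> global_map d c n ` configs d n"
proof
  assume "configs d n \<subseteq> global_map d c n ` configs d n"
  then have image: "global_map d c n ` configs d n = configs d n"
    using global_map_image_subset[OF assms] by blast
  then have "inj_on (global_map d c n) (configs d n)"
    by (intro eq_card_imp_inj_on finite_configs) (simp add: image)
  then show "reversible d c n"
    using image by (simp add: reversible_def bij_betw_def)
qed (simp add: reversible_def bij_betw_def)

definition reduce_config :: "int \<Rightarrow> nat \<Rightarrow> (nat \<Rightarrow> int) \<Rightarrow> nat \<Rightarrow> int" where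
  "reduce_config m n x i = (if i < n then x i mod m else 0)"

lemma reduce_config_in_configs: "m > 0 \<Longrightarrow> reduce_config m n x \<in> configs m n"
  by (auto simp: configs_def reduce_config_def)

lemma global_map_reduce_config: "global_map m c n (reduce_config m n x) = global_map m c n x"
proof
  fix i
  have "fdca_local c n (reduce_config m n x) i mod m = fdca_local c n x i mod m" if "i < n"
    unfolding fdca_local_def using that
    by (intro fdca_poly_mod_cong) (auto simp: reduce_config_def)
  then show "global_map m c n (reduce_config m n x) i = global_map m c n x i"
    by (simp add: global_map_eq)
qed

lemma reversible_divisor:
  assumes "m > 0" "d > 0" "m dvd d" "reversible d c n"
  shows "reversible m c n"
proof -
  have "y \<in> global_map m c n ` configs m n" if y: "y \<in> configs m n" for y
  proof -
    have "y \<in> configs d n"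
      using y zdvd_imp_le[OF assms(3,2)] by (auto simp: configs_def)
    then obtain x where x: "global_map d c n x = y"
      using assms(2,4) by (auto simp: reversible_iff_surj)
    have "global_map m c n x = y"
    proof
      fix i
      have "global_map m c n x i = global_map d c n x i mod m"
        using assms(3) by (simp add: global_map_eq mod_mod_cancel)
      then show "global_map m c n x i = y i"
        using x y by (cases "i < n") (auto simp: configs_def mod_pos_pos_trivial)
    qed
    then show ?thesis
      using reduce_config_in_configs[OF assms(1)] global_map_reduce_config by (metis image_eqI)
  qed
  then show ?thesis
    using assms(1) by (auto simp: reversible_iff_surj)
qed

lemma reversible_collision:
  assumes "m > 0" "reversible m c n"
    and "\<forall>i<n. m dvd fdca_local c n x i - fdca_local c n y i"
  shows "\<forall>i<n. m dvd x i - y i"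
proof -
  have "global_map m c n x = global_map m c n y"
    using assms(3) by (auto simp: global_map_eq mod_eq_dvd_iff)
  then have "global_map m c n (reduce_config m n x) = global_map m c n (reduce_config m n y)"
    by (simp add: global_map_reduce_config)
  moreover have "inj_on (global_map m c n) (configs m n)"
    using assms(1,2) by (simp add: reversible_iff_inj_on)
  ultimately have "reduce_config m n x = reduce_config m n y"
    using reduce_config_in_configs[OF assms(1)] by (blast dest: inj_onD)
  then show ?thesis
    by (metis mod_eq_dvd_iff reduce_config_def)
qed

subsection \<open>Sufficiency\<close>

definition prime_reversibility_condition :: "int \<Rightarrow> (nat \<Rightarrow> int) \<Rightarrow> bool" where
  "prime_reversibility_condition p c \<longleftrightarrow>
     \<not> p dvd c 5 \<and> (\<forall>i\<le>3. p dvd c i) \<and> (p dvd c 4 \<or> p dvd c 6)"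

lemma fdca_local_diff_dvd:
  fixes a b :: int
  assumes c03: "\<forall>j\<le>3. a dvd c j" and tail: "\<forall>i\<ge>n. x i = y i"
    and diff: "\<forall>i. b dvd x i - y i" and "i < n"
    and "a * b dvd fdca_local c n x i - fdca_local c n y i"
  shows "a * b dvd c 4 * (if i = 0 then 0 else x (i - 1) - y (i - 1))
                   + c 5 * (x i - y i) + c 6 * (x (Suc i) - y (Suc i))"
proof -
  define L where "L z = (if i = 0 then 0 else z (i - 1))" for z :: "nat \<Rightarrow> int"
  define R where "R z = (if i + 1 < n then z (i + 1) else 0)" for z :: "nat \<Rightarrow> int"
  have "a * b dvd c 4 * (L x - L y) + c 5 * (x i - y i) + c 6 * (R x - R y)"
    using assms(4,5) by (intro fdca_poly_diff_dvd[OF c03]) (auto simp: diff L_def R_def fdca_local_def)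
  moreover have "L x - L y = (if i = 0 then 0 else x (i - 1) - y (i - 1))"
    "R x - R y = x (Suc i) - y (Suc i)"
    using tail assms(4) by (auto simp: L_def R_def)
  ultimately show ?thesis
    by simp
qed

lemma lift_divisibility:
  fixes a b :: int
  assumes c03: "\<forall>j\<le>3. a dvd c j" and c46: "a dvd c 4 \<or> a dvd c 6"
    and coprime: "coprime (a * b) (c 5)"
    and tail: "\<forall>i\<ge>n. x i = y i"
    and images: "\<forall>i<n. a * b dvd fdca_local c n x i - fdca_local c n y i"
    and diff: "\<forall>i. b dvd x i - y i"
  shows "\<forall>i. a * b dvd x i - y i"
proof -
  define \<delta> where "\<delta> i = x i - y i" for i
  have lin: "a * b dvd c 4 * (if i = 0 then 0 else \<delta> (i - 1)) + c 5 * \<delta> i + c 6 * \<delta> (Suc i)"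
    if "i < n" for i
    unfolding \<delta>_def using fdca_local_diff_dvd[OF c03 tail diff that] images that by blast
  have cell: "a * b dvd \<delta> i"
    if "i < n" "a * b dvd c 4 * (if i = 0 then 0 else \<delta> (i - 1))" "a * b dvd c 6 * \<delta> (Suc i)"
    for i
  proof -
    let ?L = "if i = 0 then 0 else \<delta> (i - 1)"
    have "a * b dvd (c 4 * ?L + c 5 * \<delta> i + c 6 * \<delta> (Suc i)) - c 4 * ?L - c 6 * \<delta> (Suc i)"
      using lin[OF that(1)] that(2,3) by (intro dvd_diff)
    then have "a * b dvd c 5 * \<delta> i"
      by simp
    then show ?thesis
      using coprime by (simp add: coprime_dvd_mult_right_iff)
  qed
  have known: "a * b dvd c k * \<delta> i" if "a dvd c k" for k i
    using mult_dvd_mono[OF that diff[rule_format, of i]] by (simp add: \<delta>_def)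
  have "a * b dvd \<delta> i" for i
  proof (cases "i < n")
    case False
    then show ?thesis using tail by (simp add: \<delta>_def)
  next
    case True
    from c46 show ?thesis
    proof
      assume c4: "a dvd c 4"
      have "a * b dvd \<delta> j" if "j \<le> n" for j
        using that
      proof (induction j rule: inc_induct)
        case base
        then show ?case using tail by (simp add: \<delta>_def)
      next
        case (step j)
        have "a * b dvd c 4 * (if j = 0 then 0 else \<delta> (j - 1))"
          using known[OF c4] by simp
        then show ?case
          using step by (intro cell) simp_all
      qed
      then show ?thesis using True by simp
    next
      assume c6: "a dvd c 6"
      show ?thesis
        using True
      proof (induction i)
        case 0
        then show ?case
          using known[OF c6] by (intro cell) simp_all
      next
        case (Suc i)
        then show ?case
          using known[OF c6] by (intro cell) simp_all
      qed
    qed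
  qed
  then show ?thesis
    by (simp add: \<delta>_def)
qed

lemma dvd_differences_if_prime_conditions:
  assumes "d \<noteq> 0" and conditions: "\<forall>p. prime p \<longrightarrow> p dvd d \<longrightarrow> prime_reversibility_condition p c"
    and tail: "\<forall>i\<ge>n. x i = y i"
    and images: "\<forall>i<n. d dvd fdca_local c n x i - fdca_local c n y i"
  shows "\<forall>i. d dvd x i - y i"
proof -
  have coprime: "coprime (c 5) d"
    unfolding coprime_iff_no_common_prime
    using conditions by (simp add: prime_reversibility_condition_def)
  have "m dvd d \<longrightarrow> (\<forall>i. m dvd x i - y i)" for m
  proof (induction m rule: prime_divisors_induct)
    case zero
    then show ?case using assms(1) by simp
  next
    case (unit m)
    then show ?case by (simp add: unit_imp_dvd)
  next
    case (factor p m)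
    show ?case
    proof
      assume pm: "p * m dvd d"
      then have "p dvd d" "m dvd d"
        by (auto intro: dvd_mult_left dvd_mult_right)
      then have "prime_reversibility_condition p c"
        using conditions factor.hyps by blast
      then have "\<forall>j\<le>3. p dvd c j" "p dvd c 4 \<or> p dvd c 6"
        by (simp_all add: prime_reversibility_condition_def)
      moreover have "coprime (p * m) (c 5)"
        using coprime_divisors[OF pm dvd_refl, of "c 5"] coprime by (simp add: coprime_commute)
      moreover have "\<forall>i<n. p * m dvd fdca_local c n x i - fdca_local c n y i"
        using images dvd_trans[OF pm] by blast
      moreover have "\<forall>i. m dvd x i - y i"
        using factor.IH \<open>m dvd d\<close> by blast
      ultimately show "\<forall>i. p * m dvd x i - y i"
        using tail by (intro lift_divisibility)
    qed
  qed
  then show ?thesis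
    by simp
qed

lemma reversible_if_prime_conditions:
  assumes "d > 0" and conditions: "\<forall>p. prime p \<longrightarrow> p dvd d \<longrightarrow> prime_reversibility_condition p c"
  shows "reversible d c n"
proof -
  have "x = y"
    if x: "x \<in> configs d n" and y: "y \<in> configs d n"
      and images: "global_map d c n x = global_map d c n y" for x y
  proof -
    have tail: "\<forall>i\<ge>n. x i = y i"
      using x y by (simp add: configs_def)
    have "d dvd fdca_local c n x i - fdca_local c n y i" if "i < n" for i
      using fun_cong[OF images, of i] that by (simp add: global_map_eq mod_eq_dvd_iff)
    then have "d dvd x i - y i" for i
      using dvd_differences_if_prime_conditions[OF _ conditions tail] assms(1) by auto
    then have congruent: "x i mod d = y i mod d" for i
      by (simp add: mod_eq_dvd_iff)
    have "x i = y i" for i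
    proof (cases "i < n")
      case True
      with x y have "x i mod d = x i" "y i mod d = y i"
        by (auto simp: configs_def intro: mod_pos_pos_trivial)
      with congruent[of i] show ?thesis
        by simp
    qed (use tail in simp)
    then show "x = y"
      by auto
  qed
  then show ?thesis
    using assms(1) by (auto simp: reversible_iff_inj_on intro: inj_onI)
qed

subsection \<open>Necessity\<close>

lemma not_dvd_c5_if_reversible_1:
  assumes "prime p" "reversible p c 1"
  shows "\<not> p dvd c 5"
proof
  assume "p dvd c 5"
  then have "\<forall>i<1. p dvd 1 - 0"
    using reversible_collision[OF prime_gt_0_int[OF assms(1)] assms(2),
        where x = "\<lambda>_. 1" and y = "\<lambda>_. 0"]
    by (simp add: fdca_local_def fdca_poly_def)
  then have "p dvd 1"
    by auto
  then show False
    using assms(1) not_prime_unit by blast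
qed

lemma reversible_2_linear_constraint:
  assumes pr: "prime p" and rev: "reversible p c 2"
    and "p dvd c 3 * W + c 5 * \<alpha> + c 6 * \<beta>" "p dvd c 1 * W + c 4 * \<alpha> + c 5 * \<beta>"
  shows "p dvd \<alpha> \<and> p dvd \<beta>"
proof (rule ccontr)
  assume nonzero: "\<not> (p dvd \<alpha> \<and> p dvd \<beta>)"
  \<comment> \<open>\<alpha> or \<beta> is a unit, so a \<beta> + b \<alpha> takes every residue and absorbs the quadratic part\<close>
  obtain a b where ab: "p dvd a * \<beta> + b * \<alpha> - (W - \<alpha> * \<beta>)"
  proof (cases "p dvd \<beta>")
    case False
    then obtain e where e: "p dvd \<beta> * e - 1"
      using exists_inverse_mod_prime[OF pr] by blast
    have "(W - \<alpha> * \<beta>) * e * \<beta> + 0 * \<alpha> - (W - \<alpha> * \<beta>) = (W - \<alpha> * \<beta>) * (\<beta> * e - 1)"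
      by (simp add: algebra_simps)
    then show ?thesis
      using e that[of "(W - \<alpha> * \<beta>) * e" 0] by (metis dvd_mult)
  next
    case True
    then obtain e where e: "p dvd \<alpha> * e - 1"
      using nonzero exists_inverse_mod_prime[OF pr] by blast
    have "0 * \<beta> + (W - \<alpha> * \<beta>) * e * \<alpha> - (W - \<alpha> * \<beta>) = (W - \<alpha> * \<beta>) * (\<alpha> * e - 1)"
      by (simp add: algebra_simps)
    then show ?thesis
      using e that[of 0 "(W - \<alpha> * \<beta>) * e"] by (metis dvd_mult)
  qed
  have "fdca_poly c 0 (a + \<alpha>) (b + \<beta>) - fdca_poly c 0 a b
      = c 3 * (a * \<beta> + b * \<alpha> - (W - \<alpha> * \<beta>)) + (c 3 * W + c 5 * \<alpha> + c 6 * \<beta>)"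
    by (simp add: fdca_poly_def algebra_simps)
  then have cell0: "p dvd fdca_poly c 0 (a + \<alpha>) (b + \<beta>) - fdca_poly c 0 a b"
    using ab assms(3) by simp
  have "fdca_poly c (a + \<alpha>) (b + \<beta>) 0 - fdca_poly c a b 0
      = c 1 * (a * \<beta> + b * \<alpha> - (W - \<alpha> * \<beta>)) + (c 1 * W + c 4 * \<alpha> + c 5 * \<beta>)"
    by (simp add: fdca_poly_def algebra_simps)
  then have cell1: "p dvd fdca_poly c (a + \<alpha>) (b + \<beta>) 0 - fdca_poly c a b 0"
    using ab assms(4) by simp
  have "\<forall>i<2. p dvd [a + \<alpha>, b + \<beta>] ! i - [a, b] ! i"
    by (rule reversible_collision[OF prime_gt_0_int[OF pr] rev])
       (use cell0 cell1 in \<open>auto simp: fdca_local_def less_Suc_eq numeral_eq_Suc\<close>)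
  then show False
    using nonzero by (auto dest: spec[of _ 0] spec[of _ 1])
qed

lemma dvd_c1_c3_if_reversible_2:
  assumes pr: "prime p" and rev: "reversible p c 2" and c5: "\<not> p dvd c 5"
  shows "p dvd c 1 \<and> p dvd c 3"
proof (rule ccontr)
  assume c13: "\<not> (p dvd c 1 \<and> p dvd c 3)"
  \<comment> \<open>the cross product of the two coefficient rows solves both constraints\<close>
  have cross: "p dvd c 6 * c 1 - c 3 * c 5" "p dvd c 3 * c 4 - c 5 * c 1"
    using reversible_2_linear_constraint[OF pr rev,
        of "c 5 * c 5 - c 6 * c 4" "c 6 * c 1 - c 3 * c 5" "c 3 * c 4 - c 5 * c 1"]
    by (simp_all add: algebra_simps)
  have c3: "\<not> p dvd c 3"
  proof
    assume c3: "p dvd c 3"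
    have "c 6 * c 1 = (c 6 * c 1 - c 3 * c 5) + c 3 * c 5" "c 5 * c 1 = c 3 * c 4 - (c 3 * c 4 - c 5 * c 1)"
      by simp_all
    then have "p dvd c 5 * c 1"
      using cross c3 by (metis dvd_diff dvd_mult2)
    then show False
      using c5 c13 c3 pr by (simp add: prime_dvd_mult_iff)
  qed
  have "c 3 * (c 4 * c 6 - c 5 * c 5) = c 6 * (c 3 * c 4 - c 5 * c 1) + c 5 * (c 6 * c 1 - c 3 * c 5)"
    by (simp add: algebra_simps)
  then have "p dvd c 3 * (c 4 * c 6 - c 5 * c 5)"
    using cross by simp
  then have "p dvd c 4 * c 6 - c 5 * c 5"
    using c3 pr by (simp add: prime_dvd_mult_iff)
  then have "p dvd c 5"
    using reversible_2_linear_constraint[OF pr rev, of 0 "c 6" "- c 5"] by (simp add: algebra_simps)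
  then show False
    using c5 by contradiction
qed

lemma dvd_c0_if_reversible_3:
  assumes pr: "prime p" and rev: "reversible p c 3"
    and c1: "p dvd c 1" and c3: "p dvd c 3" and c5: "\<not> p dvd c 5"
  shows "p dvd c 0"
proof (rule ccontr)
  assume c0: "\<not> p dvd c 0"
  obtain e0 where e0: "p dvd c 0 * e0 - 1"
    using exists_inverse_mod_prime[OF pr c0] by blast
  obtain e5 where e5: "p dvd c 5 * e5 - 1"
    using exists_inverse_mod_prime[OF pr c5] by blast
  define K where "K = c 5 * c 5 - 2 * c 4 * c 6"
  define b where "b = - c 2 * e0"
  define t where "t = - K * e0 * e5"
  define M where "M = t - (1 + c 6) * (t + c 4)"
  have "fdca_poly c 0 1 (b + c 5) - fdca_poly c 0 (1 + c 6) b = c 3 * ((b + c 5) - (1 + c 6) * b)"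
    unfolding fdca_poly_def by algebra
  then have cell0: "p dvd fdca_poly c 0 1 (b + c 5) - fdca_poly c 0 (1 + c 6) b"
    using c3 by simp
  have "fdca_poly c 1 (b + c 5) t - fdca_poly c (1 + c 6) b (t + c 4) =
      c 1 * ((b + c 5) - (1 + c 6) * b) + c 3 * ((b + c 5) * t - b * (t + c 4))
      + (c 0 * e0 - 1) * (- c 2 * M - K * c 5 * e5) - (c 5 * e5 - 1) * K"
    unfolding fdca_poly_def M_def t_def b_def K_def by algebra
  then have cell1: "p dvd fdca_poly c 1 (b + c 5) t - fdca_poly c (1 + c 6) b (t + c 4)"
    using c1 c3 e0 e5 by (simp add: dvd_mult2)
  have "fdca_poly c (b + c 5) t 0 - fdca_poly c b (t + c 4) 0 = c 1 * ((b + c 5) * t - b * (t + c 4))"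
    unfolding fdca_poly_def by algebra
  then have cell2: "p dvd fdca_poly c (b + c 5) t 0 - fdca_poly c b (t + c 4) 0"
    using c1 by simp
  have "\<forall>i<3. p dvd [1, b + c 5, t] ! i - [1 + c 6, b, t + c 4] ! i"
    by (rule reversible_collision[OF prime_gt_0_int[OF pr] rev])
       (use cell0 cell1 cell2 in \<open>auto simp: fdca_local_def less_Suc_eq numeral_eq_Suc\<close>)
  then show False
    using c5 by (auto dest: spec[of _ 1])
qed

lemma dvd_c2_or_c6_if_reversible_3:
  assumes pr: "prime p" and rev: "reversible p c 3"
    and c0: "p dvd c 0" and c1: "p dvd c 1" and c3: "p dvd c 3" and c5: "\<not> p dvd c 5"
  shows "p dvd c 2 \<or> p dvd c 6"
proof (rule ccontr)
  assume "\<not> (p dvd c 2 \<or> p dvd c 6)"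
  then have c2: "\<not> p dvd c 2" and c6: "\<not> p dvd c 6"
    by auto
  obtain e2 where e2: "p dvd c 2 * e2 - 1"
    using exists_inverse_mod_prime[OF pr c2] by blast
  obtain e6 where e6: "p dvd c 6 * e6 - 1"
    using exists_inverse_mod_prime[OF pr c6] by blast
  define K where "K = c 5 * c 5 - 2 * c 4 * c 6"
  define t where "t = K * e2 * e6"
  have "fdca_poly c 0 (- c 6) (c 5) - fdca_poly c 0 0 0 = c 3 * (- c 6 * c 5)"
    unfolding fdca_poly_def by algebra
  then have cell0: "p dvd fdca_poly c 0 (- c 6) (c 5) - fdca_poly c 0 0 0"
    using c3 by simp
  have "fdca_poly c (- c 6) (c 5) t - fdca_poly c 0 0 (c 4 + t) =
     c 0 * (- c 6 * c 5 * t) + c 1 * (- c 6 * c 5) + c 3 * (c 5 * t)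
     - (c 2 * e2 - 1) * (K * c 6 * e6) - (c 6 * e6 - 1) * K"
    unfolding fdca_poly_def t_def K_def by algebra
  then have cell1: "p dvd fdca_poly c (- c 6) (c 5) t - fdca_poly c 0 0 (c 4 + t)"
    using c0 c1 c3 e2 e6 by (simp add: dvd_mult2)
  have "fdca_poly c (c 5) t 0 - fdca_poly c 0 (c 4 + t) 0 = c 1 * (c 5 * t)"
    unfolding fdca_poly_def by algebra
  then have cell2: "p dvd fdca_poly c (c 5) t 0 - fdca_poly c 0 (c 4 + t) 0"
    using c1 by simp
  have "\<forall>i<3. p dvd [- c 6, c 5, t] ! i - [0, 0, c 4 + t] ! i"
    by (rule reversible_collision[OF prime_gt_0_int[OF pr] rev])
       (use cell0 cell1 cell2 in \<open>auto simp: fdca_local_def less_Suc_eq numeral_eq_Suc\<close>)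
  then show False
    using c5 by (auto dest: spec[of _ 1])
qed

lemma dvd_c2_or_c4_if_reversible_3:
  assumes pr: "prime p" and rev: "reversible p c 3"
    and c0: "p dvd c 0" and c1: "p dvd c 1" and c3: "p dvd c 3" and c6: "p dvd c 6"
    and c5: "\<not> p dvd c 5"
  shows "p dvd c 2 \<or> p dvd c 4"
proof (rule ccontr)
  assume "\<not> (p dvd c 2 \<or> p dvd c 4)"
  then have c2: "\<not> p dvd c 2" and c4: "\<not> p dvd c 4"
    by auto
  obtain e2 where e2: "p dvd c 2 * e2 - 1"
    using exists_inverse_mod_prime[OF pr c2] by blast
  obtain e4 where e4: "p dvd c 4 * e4 - 1"
    using exists_inverse_mod_prime[OF pr c4] by blast
  define K where "K = c 5 * c 5 - 2 * c 4 * c 6"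
  define a where "a = K * e2 * e4"
  have "fdca_poly c 0 (a - c 6) (c 5) - fdca_poly c 0 a 0 = c 3 * ((a - c 6) * c 5)"
    unfolding fdca_poly_def by algebra
  then have cell0: "p dvd fdca_poly c 0 (a - c 6) (c 5) - fdca_poly c 0 a 0"
    using c3 by simp
  have "fdca_poly c (a - c 6) (c 5) (- c 4) - fdca_poly c a 0 0 =
     c 0 * ((a - c 6) * c 5 * (- c 4)) + c 1 * ((a - c 6) * c 5) + c 3 * (c 5 * (- c 4))
     - (c 2 * e2 - 1) * (K * c 4 * e4) - (c 4 * e4 - 1) * K + c 6 * (c 2 * c 4)"
    unfolding fdca_poly_def a_def K_def by algebra
  then have cell1: "p dvd fdca_poly c (a - c 6) (c 5) (- c 4) - fdca_poly c a 0 0"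
    using c0 c1 c3 c6 e2 e4 by (simp add: dvd_mult2)
  have "fdca_poly c (c 5) (- c 4) 0 - fdca_poly c 0 0 0 = c 1 * (c 5 * (- c 4))"
    unfolding fdca_poly_def by algebra
  then have cell2: "p dvd fdca_poly c (c 5) (- c 4) 0 - fdca_poly c 0 0 0"
    using c1 by simp
  have "\<forall>i<3. p dvd [a - c 6, c 5, - c 4] ! i - [a, 0, 0] ! i"
    by (rule reversible_collision[OF prime_gt_0_int[OF pr] rev])
       (use cell0 cell1 cell2 in \<open>auto simp: fdca_local_def less_Suc_eq numeral_eq_Suc\<close>)
  then show False
    using c5 by (auto dest: spec[of _ 1])
qed

lemma dvd_c2_if_reversible_4:
  assumes pr: "prime p" and rev: "reversible p c 4"
    and c0: "p dvd c 0" and c1: "p dvd c 1" and c3: "p dvd c 3" and c4: "p dvd c 4"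
    and c6: "p dvd c 6"
  shows "p dvd c 2"
proof (rule ccontr)
  assume c2: "\<not> p dvd c 2"
  obtain e2 where e2: "p dvd c 2 * e2 - 1"
    using exists_inverse_mod_prime[OF pr c2] by blast
  define t where "t = c 5 * c 5 * e2 * e2"
  have "fdca_poly c 0 1 (- c 2) - fdca_poly c 0 1 0 = c 3 * (- c 2) + c 6 * (- c 2)"
    unfolding fdca_poly_def by algebra
  then have cell0: "p dvd fdca_poly c 0 1 (- c 2) - fdca_poly c 0 1 0"
    using c3 c6 by simp
  have "fdca_poly c 1 (- c 2) (c 5) - fdca_poly c 1 0 0 =
      c 0 * (- c 2 * c 5) + c 1 * (- c 2) + c 3 * (- c 2 * c 5) + c 6 * c 5"
    unfolding fdca_poly_def by algebra
  then have cell1: "p dvd fdca_poly c 1 (- c 2) (c 5) - fdca_poly c 1 0 0"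
    using c0 c1 c3 c6 by simp
  have "fdca_poly c (- c 2) (c 5) t - fdca_poly c 0 0 t =
      c 0 * (- c 2 * c 5 * t) + c 1 * (- c 2 * c 5) + c 3 * (c 5 * t) + c 4 * (- c 2)
      - (c 2 * e2 - 1) * (c 5 * c 5 * (c 2 * e2 + 1))"
    unfolding fdca_poly_def t_def by algebra
  then have cell2: "p dvd fdca_poly c (- c 2) (c 5) t - fdca_poly c 0 0 t"
    using c0 c1 c3 c4 e2 by (simp add: dvd_mult2)
  have "fdca_poly c (c 5) t 0 - fdca_poly c 0 t 0 = c 1 * (c 5 * t) + c 4 * c 5"
    unfolding fdca_poly_def by algebra
  then have cell3: "p dvd fdca_poly c (c 5) t 0 - fdca_poly c 0 t 0"
    using c1 c4 by simp
  have "\<forall>i<4. p dvd [1, - c 2, c 5, t] ! i - [1, 0, 0, t] ! i"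
    by (rule reversible_collision[OF prime_gt_0_int[OF pr] rev])
       (use cell0 cell1 cell2 cell3 in \<open>auto simp: fdca_local_def less_Suc_eq numeral_eq_Suc\<close>)
  then show False
    using c2 by (auto dest: spec[of _ 1])
qed

fun recurrence_mod :: "int \<Rightarrow> int \<Rightarrow> int \<Rightarrow> nat \<Rightarrow> int" where
  "recurrence_mod p a b 0 = 0"
| "recurrence_mod p a b (Suc 0) = 1"
| "recurrence_mod p a b (Suc (Suc i)) =
     (a * recurrence_mod p a b i + b * recurrence_mod p a b (Suc i)) mod p"

lemma recurrence_mod_returns_to_zero:
  fixes p a b :: int
  assumes pr: "prime p" and a: "\<not> p dvd a"
  obtains k where "k \<ge> 2" "recurrence_mod p a b k = 0"
proof -
  let ?s = "recurrence_mod p a b"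
  define T where "T = (\<lambda>(u, v). (v, (a * u + b * v) mod p))"
  define S where "S = {0..<p} \<times> {0..<p}"
  have p: "p > 1"
    using pr prime_gt_1_int by blast
  have "inj_on T S"
  proof (rule inj_onI)
    fix z z' assume "z \<in> S" "z' \<in> S" "T z = T z'"
    then obtain u u' v where z: "z = (u, v)" "z' = (u', v)"
      and "(a * u + b * v) mod p = (a * u' + b * v) mod p"
      and range: "0 \<le> u" "u < p" "0 \<le> u'" "u' < p"
      by (auto simp: S_def T_def)
    then have "p dvd a * (u - u')"
      unfolding mod_eq_dvd_iff by (simp add: algebra_simps)
    then have "p dvd u - u'"
      using pr a by (simp add: prime_dvd_mult_iff)
    then have "u = u'"
      using range by (metis mod_eq_dvd_iff mod_pos_pos_trivial)
    then show "z = z'"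
      using z by simp
  qed
  moreover have "T ` S \<subseteq> S"
    using p by (auto simp: S_def T_def)
  ultimately have "bij_betw T S S"
    by (simp add: bij_betw_def endo_inj_surj S_def)
  then obtain k where k: "k > 0" "(T ^^ k) (0, 1) = (0, 1)"
    using bij_betw_funpow_returns[of S T "(0, 1)"] p by (auto simp: S_def)
  have orbit: "(T ^^ i) (0, 1) = (?s i, ?s (Suc i))" for i
    by (induction i) (simp_all add: T_def)
  have "k \<noteq> 1"
  proof
    assume "k = 1"
    then show False
      using k orbit[of k] by simp
  qed
  show ?thesis
  proof (rule that)
    show "k \<ge> 2"
      using k \<open>k \<noteq> 1\<close> by simp
    show "?s k = 0"
      using orbit[of k] k by simp
  qed
qed

lemma dvd_c4_or_c6_if_reversible:
  assumes pr: "prime p" and rev: "\<forall>n\<ge>1. reversible p c n" and c03: "\<forall>j\<le>3. p dvd c j"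
  shows "p dvd c 4 \<or> p dvd c 6"
proof (rule ccontr)
  assume "\<not> (p dvd c 4 \<or> p dvd c 6)"
  then have c4: "\<not> p dvd c 4" and c6: "\<not> p dvd c 6"
    by auto
  obtain e where e: "p dvd c 6 * e - 1"
    using exists_inverse_mod_prime[OF pr c6] by blast
  have "\<not> p dvd e"
  proof
    assume "p dvd e"
    then have "p dvd c 6 * e - (c 6 * e - 1)"
      using dvd_diff[OF dvd_mult e] by blast
    then show False
      using pr by (simp add: not_prime_unit)
  qed
  then have "\<not> p dvd - c 4 * e"
    using pr c4 by (simp add: prime_dvd_mult_iff)
  \<comment> \<open>G x = G 0 forces c6 x (i + 1) = - c4 x (i - 1) - c5 x i mod p, once c0, ..., c3 vanish\<close>
  define s where "s = recurrence_mod p (- c 4 * e) (- c 5 * e)"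
  obtain k where k: "k \<ge> 2" "s k = 0"
    using recurrence_mod_returns_to_zero[OF pr \<open>\<not> p dvd - c 4 * e\<close>] s_def by blast
  define n where "n = k - 1"
  have "n \<ge> 1"
    using k by (simp add: n_def)
  have "\<forall>i<n. p dvd s (Suc i) - 0"
  proof (rule reversible_collision[OF prime_gt_0_int[OF pr] rev[rule_format, OF \<open>n \<ge> 1\<close>]])
    show "\<forall>i<n. p dvd fdca_local c n (\<lambda>i. s (Suc i)) i - fdca_local c n (\<lambda>_. 0) i"
    proof (intro allI impI)
      fix i assume "i < n"
      define u v w where "u = s i" and "v = s (Suc i)" and "w = s (Suc (Suc i))"
      have w: "w = (- (c 4 * u + c 5 * v) * e) mod p"
        by (simp add: u_def v_def w_def s_def algebra_simps)
      have "(if i = 0 then 0 else s (Suc (i - 1))) = u"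
        by (cases i) (simp_all add: u_def s_def)
      moreover have "(if i + 1 < n then s (Suc (i + 1)) else 0) = w"
        using \<open>i < n\<close> k by (cases "Suc (Suc i) = k") (auto simp: w_def n_def)
      moreover have "p dvd w - (- (c 4 * u + c 5 * v) * e)"
        using w by (simp add: mod_eq_dvd_iff[symmetric])
      moreover have "fdca_poly c u v w - fdca_poly c 0 0 0
          = c 0 * (u * v * w) + c 1 * (u * v) + c 2 * (u * w) + c 3 * (v * w)
            + c 6 * (w - (- (c 4 * u + c 5 * v) * e)) - (c 6 * e - 1) * (c 4 * u + c 5 * v)"
        unfolding fdca_poly_def by algebra
      ultimately show "p dvd fdca_local c n (\<lambda>i. s (Suc i)) i - fdca_local c n (\<lambda>_. 0) i"
        using c03 e by (simp add: fdca_local_def v_def dvd_mult2 le_Suc_eq numeral_eq_Suc)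
    qed
  qed
  then have "p dvd s 1"
    using \<open>n \<ge> 1\<close> by auto
  then show False
    using pr by (simp add: s_def not_prime_unit)
qed

lemma prime_condition_if_reversible:
  assumes pr: "prime p" and rev: "\<forall>n\<ge>1. reversible p c n"
  shows "prime_reversibility_condition p c"
proof -
  have rev1: "reversible p c 1" and rev2: "reversible p c 2"
    and rev3: "reversible p c 3" and rev4: "reversible p c 4"
    using rev by simp_all
  have c5: "\<not> p dvd c 5"
    using not_dvd_c5_if_reversible_1[OF pr rev1] .
  have c1: "p dvd c 1" and c3: "p dvd c 3"
    using dvd_c1_c3_if_reversible_2[OF pr rev2 c5] by simp_all
  have c0: "p dvd c 0"
    using dvd_c0_if_reversible_3[OF pr rev3 c1 c3 c5] .
  have c2: "p dvd c 2"
  proof (rule ccontr)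
    assume c2: "\<not> p dvd c 2"
    then have c6: "p dvd c 6"
      using dvd_c2_or_c6_if_reversible_3[OF pr rev3 c0 c1 c3 c5] by simp
    then have c4: "p dvd c 4"
      using dvd_c2_or_c4_if_reversible_3[OF pr rev3 c0 c1 c3 _ c5] c2 by simp
    show False
      using dvd_c2_if_reversible_4[OF pr rev4 c0 c1 c3 c4 c6] c2 by simp
  qed
  have "\<forall>j\<le>3. p dvd c j"
    using c0 c1 c2 c3 by (auto simp: le_Suc_eq numeral_eq_Suc)
  then show ?thesis
    using c5 dvd_c4_or_c6_if_reversible[OF pr rev] by (simp add: prime_reversibility_condition_def)
qed

lemma reversible_iff_prime_conditions:
  assumes "d > 0"
  shows "(\<forall>n\<ge>1. reversible d c n) \<longleftrightarrow>
         (\<forall>p. prime p \<longrightarrow> p dvd d \<longrightarrow> prime_reversibility_condition p c)"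
proof
  assume "\<forall>n\<ge>1. reversible d c n"
  then show "\<forall>p. prime p \<longrightarrow> p dvd d \<longrightarrow> prime_reversibility_condition p c"
    using assms prime_gt_0_int reversible_divisor prime_condition_if_reversible by metis
qed (use assms reversible_if_prime_conditions in blast)

lemma prime_conditions_iff_rad:
  assumes "d \<noteq> 0"
  shows "(\<forall>p. prime p \<longrightarrow> p dvd d \<longrightarrow> prime_reversibility_condition p c) \<longleftrightarrow>
         coprime (c 5) d \<and> (\<forall>i\<le>3. rad d dvd c i) \<and> rad d dvd c 4 * c 6"
  unfolding prime_reversibility_condition_def coprime_iff_no_common_prime rad_dvd_iff[OF assms]
  by (auto simp: prime_dvd_mult_iff)

theorem theorem1:
  fixes d :: int and c :: "nat \<Rightarrow> int"
  assumes "d \<ge> 2"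
    and "\<forall>i\<le>7. 0 \<le> c i \<and> c i < d"
  shows "(\<forall>n\<ge>1. reversible d c n) \<longleftrightarrow>
           (gcd (c 5) d = 1
            \<and> (\<forall>i\<le>3. c i mod rad d = 0)
            \<and> (c 4 * c 6) mod rad d = 0)"
proof -
  have "d > 0"
    using assms(1) by simp
  then show ?thesis
    using reversible_iff_prime_conditions prime_conditions_iff_rad
    by (simp add: coprime_iff_gcd_eq_1 dvd_eq_mod_eq_0)
qed

end
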